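(* Under the hypotheses of Proposition 1 — namely $\boldsymbol{S}\in\mathrm{Mat}(M,M,\mathbb{C})$ invertible, $\boldsymbol{U}\in\mathrm{Mat}(m,M,\mathbb{C})$, $\boldsymbol{V}\in\mathrm{Mat}(M,m,\mathbb{C})$, $\boldsymbol{K}$ satisfying $\boldsymbol{S}\boldsymbol{K}+\boldsymbol{K}\boldsymbol{S}=\boldsymbol{V}\boldsymbol{U}$, $\boldsymbol{\Xi}=e^{-\boldsymbol{S}x-\boldsymbol{S}^{-1}y}$, $p_0$ a constant $m\times m$ matrix (or a function of $x$ only), and $$q=\boldsymbol{U}\boldsymbol{\Xi}\,(\boldsymbol{I}_M+(\boldsymbol{K}\boldsymbol{\Xi})^2)^{-1}\boldsymbol{V},\qquad p=p_0-\boldsymbol{U}\boldsymbol{\Xi}\boldsymbol{K}\boldsymbol{\Xi}\,(\boldsymbol{I}_M+(\boldsymbol{K}\boldsymbol{\Xi})^2)^{-1}\boldsymbol{V}$$ on an open set where $\boldsymbol{I}_M+(\boldsymbol{K}\boldsymbol{\Xi})^2$ is invertible — the identity $$(q_y)^2+(p_y)^2=p_y$$ holds (as an identity of $m\times m$ matrix functions).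
   Context: Subscripts $x,y$ denote partial derivatives with respect to the real variables $x,y$; $\boldsymbol{I}_M$ is the $M\times M$ identity matrix. *)

theory Defs
  imports "HOL-Analysis.Analysis"
begin

primrec mat_pow :: "complex^'n^'n \<Rightarrow> nat \<Rightarrow> complex^'n^'n" where
  "mat_pow A 0 = mat 1"
| "mat_pow A (Suc k) = A ** mat_pow A k"

definition mat_exp :: "complex^'n^'n \<Rightarrow> complex^'n^'n" where
  "mat_exp A = (\<Sum>k. (1 / fact k) *\<^sub>R mat_pow A k)"

end

theory Submission
  imports Defs
begin

(* Fix (x, y) in D and write X(t) = Xi x t = exp(-xS - tT) with T = S^-1, so that X' = -T X and
   X commutes with S and T.  Put A = K X.  Since  I + A^2 = (I - iA)(I + iA),  the two "Cayley
   resolvents"  G_c = (I - c A)^-1,  c = i or c = -i,  exist wherever I + A^2 is invertible, and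
       (I + A^2)^-1 = (G_i + G_-i)/2,        A (I + A^2)^-1 = -(i/2) (G_i - G_-i).
   Hence q = (w_i + w_-i)/2 and p = p0 + (i/2)(w_i - w_-i) with  w_c = U X G_c V.  Differentiating
   w_c in y gives  w_c' = -U Y_c V  with  Y_c = X G_c T G_c,  so with a = U Y_i V, b = U Y_-i V:
       q_y = -(a + b)/2,      p_y = (i/2)(b - a).
   The Sylvester equation SK + KS = VU turns into the anticommutator relation ab + ba = i(b - a),
   and then  q_y^2 + p_y^2 = (ab + ba)/2 = p_y. *)

lemma matrix_add_rdistrib: "(A + B) ** C = A ** C + B ** C"
  for A B :: "'a::semiring_1^'n^'m"
  by (vector matrix_matrix_mult_def sum.distrib[symmetric] field_simps)

lemma matrix_diff_ldistrib: "A ** (B - C) = A ** B - A ** C"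
  for A :: "'a::ring_1^'n^'m"
  by (simp add: matrix_matrix_mult_def vec_eq_iff sum_subtractf right_diff_distrib)

lemma matrix_diff_rdistrib: "(A - B) ** C = A ** C - B ** C"
  for A B :: "'a::ring_1^'n^'m"
  by (simp add: matrix_matrix_mult_def vec_eq_iff sum_subtractf left_diff_distrib)

lemma matrix_minus_left: "(- A) ** B = - (A ** B)"
  for A :: "'a::ring_1^'n^'m"
  by (simp add: matrix_matrix_mult_def vec_eq_iff sum_negf)

lemma matrix_minus_right: "A ** (- B) = - (A ** B)"
  for A :: "'a::ring_1^'n^'m"
  by (simp add: matrix_matrix_mult_def vec_eq_iff sum_negf)

lemma matrix_scaleR_left: "(r *\<^sub>R A) ** B = r *\<^sub>R (A ** B)"
  for A :: "'a::real_algebra_1^'n^'m"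
  by (simp add: scalar_matrix_assoc)

lemma matrix_scaleR_right: "A ** (r *\<^sub>R B) = r *\<^sub>R (A ** B)"
  for A :: "'a::real_algebra_1^'n^'m"
  by (simp add: matrix_scalar_ac scalar_matrix_assoc)

lemmas matrix_ring_simps = matrix_mul_assoc matrix_add_ldistrib matrix_add_rdistrib
  matrix_diff_ldistrib matrix_diff_rdistrib matrix_minus_left matrix_minus_right

text \<open>Multiplication of a matrix by a scalar of its own coefficient ring (the matrix types are only
  real vector spaces, so complex scalars such as \<open>\<i>\<close> need their own operation).\<close>
definition cscale :: "'a::comm_ring_1 \<Rightarrow> 'a^'n^'m \<Rightarrow> 'a^'n^'m" where
  "cscale c A = (\<chi> i j. c * A$i$j)"

lemma cscale_mult_left [simp]: "cscale c A ** B = cscale c (A ** B)"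
  by (simp add: cscale_def matrix_matrix_mult_def vec_eq_iff sum_distrib_left mult.assoc)

lemma cscale_mult_right [simp]: "A ** cscale c B = cscale c (A ** B)"
  by (simp add: cscale_def matrix_matrix_mult_def vec_eq_iff sum_distrib_left mult_ac)

lemma cscale_cscale [simp]: "cscale c (cscale d A) = cscale (c * d) A"
  by (simp add: cscale_def vec_eq_iff mult.assoc)

lemma cscale_add [simp]: "cscale c (A + B) = cscale c A + cscale c B"
  by (simp add: cscale_def vec_eq_iff algebra_simps)

lemma cscale_diff [simp]: "cscale c (A - B) = cscale c A - cscale c B"
  by (simp add: cscale_def vec_eq_iff algebra_simps)

lemma cscale_minus [simp]: "cscale c (- A) = - cscale c A"
  by (simp add: cscale_def vec_eq_iff)

lemma cscale_one [simp]: "cscale 1 A = A"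
  by (simp add: cscale_def vec_eq_iff)

text \<open>\<open>algebra_simps\<close> writes \<open>A + A\<close> as \<open>2 * A\<close> (componentwise product); these absorb such numerals.\<close>
lemma cscale_numeral [simp]: "cscale c (numeral w * A) = numeral w * cscale c A"
  by (simp add: cscale_def vec_eq_iff mult_ac)

lemma numeral_times_cscale [simp]: "numeral w * cscale c A = cscale (numeral w * c) A"
  by (simp add: cscale_def vec_eq_iff mult_ac)

lemma cscale_neg_scalar: "cscale (- c) A = - cscale c A"
  by (simp add: cscale_def vec_eq_iff)

lemma cscale_half_double: "cscale (1/2) (A + A) = (A :: 'a::field_char_0^'n^'m)"
  by (simp add: cscale_def vec_eq_iff field_simps)

lemma cscale_solve:
  assumes "c * d = 1" "cscale c A = B"
  shows "A = cscale d B"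
  using assms by (metis cscale_cscale cscale_one mult.commute)

lemma matrix_inv_right: "invertible A \<Longrightarrow> A ** matrix_inv A = mat 1"
  for A :: "'a::semiring_1^'n^'n"
  unfolding invertible_def matrix_inv_def by (rule someI2_ex) auto

lemma matrix_inv_left: "invertible A \<Longrightarrow> matrix_inv A ** A = mat 1"
  for A :: "'a::semiring_1^'n^'n"
  unfolding invertible_def matrix_inv_def by (rule someI2_ex) auto

lemma matrix_inv_unique:
  fixes A Z :: "'a::semiring_1^'n^'n"
  assumes "Z ** A = mat 1" "invertible A"
  shows "matrix_inv A = Z"
proof -
  have "Z = Z ** (A ** matrix_inv A)" using matrix_inv_right[OF assms(2)] by simp
  also have "\<dots> = matrix_inv A" using assms(1) by (simp add: matrix_mul_assoc)
  finally show ?thesis by simp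
qed

lemma invertible_mult_factors:
  fixes P Q :: "'a::field^'n^'n"
  assumes "invertible (P ** Q)"
  shows "invertible P" "invertible Q"
proof -
  obtain R where R: "P ** Q ** R = mat 1" "R ** (P ** Q) = mat 1"
    using assms unfolding invertible_def by blast
  have "P ** (Q ** R) = mat 1" using R(1) by (simp add: matrix_mul_assoc)
  then show "invertible P" using invertible_right_inverse by blast
  have "(R ** P) ** Q = mat 1" using R(2) by (simp add: matrix_mul_assoc)
  then show "invertible Q" using invertible_left_inverse by blast
qed

lemma matrix_inv_diff:
  fixes P Q :: "'a::ring_1^'n^'n"
  assumes "invertible P" "invertible Q"
  shows "matrix_inv P - matrix_inv Q = matrix_inv P ** (Q - P) ** matrix_inv Q"
  using assms by (simp add: matrix_ring_simps matrix_inv_left matrix_inv_right flip: matrix_mul_assoc)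

lemma bounded_bilinear_matrix_mult:
  "bounded_bilinear ((**) :: complex^'n^'m \<Rightarrow> complex^'k^'n \<Rightarrow> complex^'k^'m)"
proof -
  have "bilinear ((**) :: complex^'n^'m \<Rightarrow> complex^'k^'n \<Rightarrow> complex^'k^'m)"
    unfolding bilinear_def linear_iff
    by (auto simp: matrix_add_ldistrib matrix_add_rdistrib matrix_scalar_ac scalar_matrix_assoc)
  then show ?thesis using bilinear_conv_bounded_bilinear by blast
qed

lemma bounded_linear_cscale: "bounded_linear (cscale c :: complex^'n^'m \<Rightarrow> complex^'n^'m)"
proof -
  have "linear (cscale c :: complex^'n^'m \<Rightarrow> complex^'n^'m)"
    by (rule linearI) (simp_all add: cscale_def vec_eq_iff mult_ac distrib_left)
  then show ?thesis using linear_conv_bounded_linear by blast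
qed

subsection \<open>Derivative of the matrix inverse\<close>

lemma has_vector_derivative_at_iff_quotient:
  fixes f :: "real \<Rightarrow> 'a::real_normed_vector"
  shows "(f has_vector_derivative D) (at y) \<longleftrightarrow> ((\<lambda>t. (f t - f y) /\<^sub>R (t - y)) \<longlongrightarrow> D) (at y)"
proof -
  have quotient_norm: "norm (f t - f y - (t - y) *\<^sub>R D) / norm (t - y) = norm ((f t - f y) /\<^sub>R (t - y) - D)"
    if "t \<noteq> y" for t
  proof -
    have "inverse (t - y) *\<^sub>R ((t - y) *\<^sub>R D) = D" using that by simp
    then have "(f t - f y) /\<^sub>R (t - y) - D = inverse (t - y) *\<^sub>R (f t - f y - (t - y) *\<^sub>R D)"
      by (simp only: scaleR_diff_right)
    then show ?thesis by (simp add: divide_inverse mult.commute)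
  qed
  have "(f has_vector_derivative D) (at y)
      \<longleftrightarrow> ((\<lambda>t. norm (f t - f y - (t - y) *\<^sub>R D) / norm (t - y)) \<longlongrightarrow> 0) (at y)"
    by (simp add: has_vector_derivative_def has_derivative_iff_norm bounded_linear_scaleR_left)
  also have "\<dots> \<longleftrightarrow> ((\<lambda>t. norm ((f t - f y) /\<^sub>R (t - y) - D)) \<longlongrightarrow> 0) (at y)"
    by (rule tendsto_cong) (auto simp: eventually_at_filter quotient_norm[unfolded real_norm_def])
  also have "\<dots> \<longleftrightarrow> ((\<lambda>t. (f t - f y) /\<^sub>R (t - y)) \<longlongrightarrow> D) (at y)"
    by (simp add: tendsto_norm_zero_iff LIM_zero_iff)
  finally show ?thesis .
qed

text \<open>From the resolvent identity,
  \<open>\<parallel>F\<^sup>-\<^sup>1 - A\<^sup>-\<^sup>1\<parallel> \<le> \<delta> \<parallel>F\<^sup>-\<^sup>1\<parallel>\<close> with \<open>\<delta> \<rightarrow> 0\<close>; this first bounds \<open>\<parallel>F\<^sup>-\<^sup>1\<parallel>\<close> near the limit and then forces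
  convergence.\<close>
lemma tendsto_matrix_inv:
  fixes F :: "'b \<Rightarrow> complex^'n^'n"
  assumes lim: "(F \<longlongrightarrow> A) L" and invA: "invertible A"
    and inv: "\<forall>\<^sub>F t in L. invertible (F t)"
  shows "((\<lambda>t. matrix_inv (F t)) \<longlongrightarrow> matrix_inv A) L"
proof -
  obtain c where c: "c > 0" "\<And>(a::complex^'n^'n) (b::complex^'n^'n). norm (a ** b) \<le> norm a * norm b * c"
    using bounded_bilinear.pos_bounded[OF bounded_bilinear_matrix_mult] by blast
  define G where "G t = matrix_inv (F t)" for t
  define B where "B = matrix_inv A"
  define \<delta> where "\<delta> t = norm (F t - A) * c * c * norm B" for t
  have resolvent_bound: "norm (G t - B) \<le> norm (G t) * \<delta> t" if "invertible (F t)" for t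
  proof -
    have "norm (G t - B) = norm (G t ** (A - F t) ** B)"
      unfolding G_def B_def by (simp add: matrix_inv_diff[OF that invA])
    also have "\<dots> \<le> norm (G t ** (A - F t)) * norm B * c" by (rule c(2))
    also have "\<dots> \<le> (norm (G t) * norm (A - F t) * c) * norm B * c"
      using c(1) by (intro mult_right_mono c(2)) auto
    finally show ?thesis by (simp add: \<delta>_def norm_minus_commute mult_ac)
  qed
  have \<delta>_lim: "(\<delta> \<longlongrightarrow> 0) L"
    unfolding \<delta>_def using LIM_zero[OF lim]
    by (intro tendsto_mult_left_zero tendsto_norm_zero)
  have "\<forall>\<^sub>F t in L. \<delta> t < 1/2"
    using order_tendstoD(2)[OF \<delta>_lim, of "1/2"] by simp
  then have G_bounded: "\<forall>\<^sub>F t in L. norm (G t) \<le> 2 * norm B"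
    using inv
  proof eventually_elim
    case (elim t)
    have "norm (G t) \<le> norm B + norm (G t - B)" by (rule norm_triangle_sub)
    also have "\<dots> \<le> norm B + norm (G t) * (1/2)"
      using resolvent_bound[OF elim(2)] mult_left_mono[of "\<delta> t" "1/2" "norm (G t)"] elim(1) by simp
    finally show ?case by simp
  qed
  have "\<forall>\<^sub>F t in L. norm (G t - B) \<le> 2 * norm B * \<delta> t"
    using G_bounded inv
  proof eventually_elim
    case (elim t)
    have "0 \<le> \<delta> t" using c(1) by (simp add: \<delta>_def)
    then show ?case using resolvent_bound[OF elim(2)] mult_right_mono[OF elim(1)] by (meson order.trans)
  qed
  moreover have "((\<lambda>t. 2 * norm B * \<delta> t) \<longlongrightarrow> 0) L"
    by (rule tendsto_mult_right_zero[OF \<delta>_lim])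
  ultimately have "((\<lambda>t. G t - B) \<longlongrightarrow> 0) L" by (rule Lim_null_comparison)
  then show ?thesis by (simp add: G_def B_def LIM_zero_iff)
qed

lemma has_vector_derivative_matrix_inv:
  fixes F :: "real \<Rightarrow> complex^'n^'n"
  assumes dF: "(F has_vector_derivative F') (at y)"
    and inv: "\<forall>\<^sub>F t in nhds y. invertible (F t)"
  shows "((\<lambda>t. matrix_inv (F t)) has_vector_derivative
           - (matrix_inv (F y) ** F' ** matrix_inv (F y))) (at y)"
proof -
  define G where "G t = matrix_inv (F t)" for t
  have invy: "invertible (F y)" and inv_at: "\<forall>\<^sub>F t in at y. invertible (F t)"
    using inv by (simp_all add: eventually_nhds_conv_at)
  have "(F \<longlongrightarrow> F y) (at y)"
    using has_vector_derivative_continuous[OF dF] by (simp add: continuous_at)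
  then have G_lim: "(G \<longlongrightarrow> G y) (at y)"
    unfolding G_def using invy inv_at by (rule tendsto_matrix_inv)
  have "((\<lambda>t. (F t - F y) /\<^sub>R (t - y)) \<longlongrightarrow> F') (at y)"
    using dF has_vector_derivative_at_iff_quotient by blast
  then have "((\<lambda>t. - (G t ** ((F t - F y) /\<^sub>R (t - y)) ** G y)) \<longlongrightarrow> - (G y ** F' ** G y)) (at y)"
    by (intro tendsto_minus bounded_bilinear.tendsto[OF bounded_bilinear_matrix_mult] G_lim tendsto_const)
  moreover have "\<forall>\<^sub>F t in at y. - (G t ** ((F t - F y) /\<^sub>R (t - y)) ** G y) = (G t - G y) /\<^sub>R (t - y)"
    using inv_at
  proof eventually_elim
    case (elim t)
    show ?case
      unfolding G_def matrix_inv_diff[OF elim invy]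
      by (simp add: matrix_ring_simps scalar_matrix_assoc matrix_scalar_ac scaleR_diff_right)
  qed
  ultimately have "((\<lambda>t. (G t - G y) /\<^sub>R (t - y)) \<longlongrightarrow> - (G y ** F' ** G y)) (at y)"
    by (rule Lim_transform_eventually)
  then show ?thesis unfolding G_def by (simp add: has_vector_derivative_at_iff_quotient)
qed

subsection \<open>The matrix exponential\<close>

lemma mat_pow_commute:
  fixes B C :: "complex^'n^'n"
  assumes "B ** C = C ** B"
  shows "B ** mat_pow C k = mat_pow C k ** B"
proof (induction k)
  case 0
  then show ?case by simp
next
  case (Suc k)
  have "B ** mat_pow C (Suc k) = (B ** C) ** mat_pow C k" by (simp add: matrix_mul_assoc)
  also have "\<dots> = C ** (B ** mat_pow C k)" by (simp add: assms matrix_mul_assoc)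
  also have "\<dots> = mat_pow C (Suc k) ** B" by (simp add: Suc matrix_mul_assoc)
  finally show ?case .
qed

lemma norm_mat_pow_le:
  fixes A :: "complex^'n^'n"
  assumes c: "0 \<le> c" "\<And>(a::complex^'n^'n) (b::complex^'n^'n). norm (a ** b) \<le> norm a * norm b * c"
  shows "norm (mat_pow A k) \<le> norm (mat 1 :: complex^'n^'n) * (c * norm A) ^ k"
proof (induction k)
  case 0
  then show ?case by simp
next
  case (Suc k)
  have "norm (mat_pow A (Suc k)) \<le> norm A * norm (mat_pow A k) * c" by (simp add: c(2))
  also have "\<dots> \<le> norm A * (norm (mat 1 :: complex^'n^'n) * (c * norm A) ^ k) * c"
    using c(1) Suc by (intro mult_right_mono mult_left_mono) auto
  also have "\<dots> = norm (mat 1 :: complex^'n^'n) * (c * norm A) ^ Suc k" by (simp add: mult_ac)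
  finally show ?case .
qed

lemma norm_exp_term_le:
  fixes A :: "complex^'n^'n"
  assumes c: "0 \<le> c" "\<And>(a::complex^'n^'n) (b::complex^'n^'n). norm (a ** b) \<le> norm a * norm b * c"
    and R: "norm A \<le> R"
  shows "norm ((1 / fact k) *\<^sub>R mat_pow A k) \<le> norm (mat 1 :: complex^'n^'n) * (c * R) ^ k / fact k"
proof -
  have "norm (mat_pow A k) \<le> norm (mat 1 :: complex^'n^'n) * (c * norm A) ^ k"
    by (rule norm_mat_pow_le[OF c])
  also have "\<dots> \<le> norm (mat 1 :: complex^'n^'n) * (c * R) ^ k"
    using c(1) R by (intro mult_left_mono power_mono mult_left_mono) auto
  finally show ?thesis by (simp add: divide_right_mono)
qed

lemma summable_exp_majorant: "summable (\<lambda>k. N * r ^ k / fact k :: real)"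
proof -
  have "summable (\<lambda>k. N * (inverse (fact k) * r ^ k))"
    by (intro summable_mult summable_exp)
  then show ?thesis by (simp add: divide_inverse mult_ac)
qed

lemma mat_exp_summable: "summable (\<lambda>k. (1 / fact k) *\<^sub>R mat_pow (A::complex^'n^'n) k)"
proof -
  obtain c where c: "c > 0" "\<And>(a::complex^'n^'n) (b::complex^'n^'n). norm (a ** b) \<le> norm a * norm b * c"
    using bounded_bilinear.pos_bounded[OF bounded_bilinear_matrix_mult] by blast
  show ?thesis
    using norm_exp_term_le[OF less_imp_le[OF c(1)] c(2) order_refl]
    by (rule summable_comparison_test'[OF summable_exp_majorant])
qed

lemma mat_exp_commute:
  fixes Z A :: "complex^'n^'n"
  assumes "Z ** A = A ** Z"
  shows "Z ** mat_exp A = mat_exp A ** Z"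
proof -
  have "Z ** mat_exp A = (\<Sum>k. Z ** ((1 / fact k) *\<^sub>R mat_pow A k))"
    unfolding mat_exp_def
    by (rule bounded_linear.suminf[OF bounded_bilinear.bounded_linear_right[OF bounded_bilinear_matrix_mult]
          mat_exp_summable])
  also have "\<dots> = (\<Sum>k. ((1 / fact k) *\<^sub>R mat_pow A k) ** Z)"
    using mat_pow_commute[OF assms] by (simp add: matrix_scaleR_left matrix_scaleR_right)
  also have "\<dots> = mat_exp A ** Z"
    unfolding mat_exp_def
    by (rule bounded_linear.suminf[OF bounded_bilinear.bounded_linear_left[OF bounded_bilinear_matrix_mult]
          mat_exp_summable, symmetric])
  finally show ?thesis .
qed

lemma mat_pow_has_vector_derivative:
  fixes B C :: "complex^'n^'n"
  assumes BC: "B ** C = C ** B"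
  shows "((\<lambda>s. mat_pow (C + s *\<^sub>R B) (Suc m)) has_vector_derivative
           real (Suc m) *\<^sub>R (B ** mat_pow (C + s *\<^sub>R B) m)) (at s)"
proof (induction m)
  case 0
  have "((\<lambda>s. C + s *\<^sub>R B) has_vector_derivative B) (at s)"
    by (auto intro!: derivative_eq_intros)
  then show ?case by simp
next
  case (Suc m)
  define P where "P = C + s *\<^sub>R B"
  have comm: "B ** P = P ** B"
    by (simp add: P_def matrix_add_ldistrib matrix_add_rdistrib matrix_scalar_ac BC)
  have "((\<lambda>s. C + s *\<^sub>R B) has_vector_derivative B) (at s)"
    by (auto intro!: derivative_eq_intros)
  then have "((\<lambda>s. (C + s *\<^sub>R B) ** mat_pow (C + s *\<^sub>R B) (Suc m)) has_vector_derivative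
      P ** (real (Suc m) *\<^sub>R (B ** mat_pow P m)) + B ** mat_pow P (Suc m)) (at s)"
    unfolding P_def by (rule bounded_bilinear.has_vector_derivative[OF bounded_bilinear_matrix_mult _ Suc])
  moreover have "P ** (real (Suc m) *\<^sub>R (B ** mat_pow P m)) + B ** mat_pow P (Suc m)
      = real (Suc (Suc m)) *\<^sub>R (B ** mat_pow P (Suc m))"
  proof -
    have "P ** (B ** mat_pow P m) = B ** mat_pow P (Suc m)"
      by (simp add: matrix_mul_assoc comm)
    then have "P ** (real (Suc m) *\<^sub>R (B ** mat_pow P m)) = real (Suc m) *\<^sub>R (B ** mat_pow P (Suc m))"
      by (simp only: matrix_scaleR_right)
    then show ?thesis by (simp only: of_nat_Suc[of "Suc m"] scaleR_add_left scaleR_one ac_simps)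
  qed
  ultimately show ?case by (simp add: P_def)
qed

lemma has_vector_derivative_suminf:
  fixes f f' :: "nat \<Rightarrow> real \<Rightarrow> 'a::banach"
  assumes S: "convex S" "open S"
    and der: "\<And>n t. t \<in> S \<Longrightarrow> (f n has_vector_derivative f' n t) (at t)"
    and unif: "uniform_limit S (\<lambda>n t. \<Sum>i<n. f' i t) g' sequentially"
    and x0: "x0 \<in> S" "summable (\<lambda>n. f n x0)"
    and t: "t \<in> S"
  shows "((\<lambda>t. \<Sum>n. f n t) has_vector_derivative g' t) (at t)"
proof -
  have "\<exists>g. \<forall>x\<in>S. (\<lambda>n. f n x) sums (g x) \<and> (g has_derivative (\<lambda>h. h *\<^sub>R g' x)) (at x within S)"
  proof (rule has_derivative_series[where f' = "\<lambda>n x h. h *\<^sub>R f' n x"])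
    show "\<And>n x. x \<in> S \<Longrightarrow> (f n has_derivative (\<lambda>h. h *\<^sub>R f' n x)) (at x within S)"
      using der has_vector_derivative_def has_derivative_at_withinI by blast
    show "\<forall>\<^sub>F n in sequentially. \<forall>x\<in>S. \<forall>h. norm ((\<Sum>i<n. h *\<^sub>R f' i x) - h *\<^sub>R g' x) \<le> e * norm h"
      if "e > 0" for e
    proof -
      from unif that have "\<forall>\<^sub>F n in sequentially. \<forall>x\<in>S. dist (\<Sum>i<n. f' i x) (g' x) < e"
        unfolding uniform_limit_iff by blast
      then show ?thesis
      proof (rule eventually_mono, intro ballI allI)
        fix n x and h :: real
        assume "\<forall>x\<in>S. dist (\<Sum>i<n. f' i x) (g' x) < e" "x \<in> S"
        then have "norm ((\<Sum>i<n. f' i x) - g' x) \<le> e" by (simp add: dist_norm less_imp_le)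
        then have "norm h * norm ((\<Sum>i<n. f' i x) - g' x) \<le> norm h * e" by (simp add: mult_left_mono)
        then show "norm ((\<Sum>i<n. h *\<^sub>R f' i x) - h *\<^sub>R g' x) \<le> e * norm h"
          by (simp add: scaleR_sum_right[symmetric] scaleR_diff_right[symmetric] mult.commute)
      qed
    qed
  qed (use S x0 in \<open>auto simp: summable_sums\<close>)
  then obtain g where g: "\<And>x. x \<in> S \<Longrightarrow> (\<lambda>n. f n x) sums (g x)"
    "\<And>x. x \<in> S \<Longrightarrow> (g has_derivative (\<lambda>h. h *\<^sub>R g' x)) (at x within S)" by blast
  have "(g has_derivative (\<lambda>h. h *\<^sub>R g' t)) (at t)"
    using g(2)[OF t] at_within_open[OF t S(2)] by simp
  then have "((\<lambda>t. \<Sum>n. f n t) has_derivative (\<lambda>h. h *\<^sub>R g' t)) (at t)"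
    by (rule has_derivative_transform_within_open[OF _ S(2) t]) (use g(1) sums_unique in metis)
  then show ?thesis by (simp add: has_vector_derivative_def)
qed

lemma exp_term_has_vector_derivative:
  fixes B C :: "complex^'n^'n"
  assumes BC: "B ** C = C ** B"
  shows "((\<lambda>r. (1 / fact (Suc m)) *\<^sub>R mat_pow (C + r *\<^sub>R B) (Suc m)) has_vector_derivative
           B ** ((1 / fact m) *\<^sub>R mat_pow (C + r *\<^sub>R B) m)) (at r)"
proof -
  have "((\<lambda>r. (1 / fact (Suc m)) *\<^sub>R mat_pow (C + r *\<^sub>R B) (Suc m)) has_vector_derivative
      (1 / fact (Suc m)) *\<^sub>R (real (Suc m) *\<^sub>R (B ** mat_pow (C + r *\<^sub>R B) m))) (at r)"
    by (rule bounded_linear.has_vector_derivative[OF bounded_linear_scaleR_right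
          mat_pow_has_vector_derivative[OF BC]])
  moreover have "(1 / fact (Suc m)) * real (Suc m) = (1 / fact m :: real)"
    by simp
  ultimately show ?thesis by (simp add: matrix_scaleR_right)
qed

lemma exp_series_dominated:
  fixes B C :: "complex^'n^'n"
  obtains E where "summable E"
    and "\<And>n r. r \<in> ball s 1 \<Longrightarrow> norm ((1 / fact n) *\<^sub>R mat_pow (C + r *\<^sub>R B) n) \<le> E n"
proof -
  obtain c where c: "c > 0" "\<And>(a::complex^'n^'n) (b::complex^'n^'n). norm (a ** b) \<le> norm a * norm b * c"
    using bounded_bilinear.pos_bounded[OF bounded_bilinear_matrix_mult] by blast
  define R where "R = norm C + (\<bar>s\<bar> + 1) * norm B"
  have "norm ((1 / fact n) *\<^sub>R mat_pow (C + r *\<^sub>R B) n) \<le> norm (mat 1 :: complex^'n^'n) * (c * R) ^ n / fact n"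
    if "r \<in> ball s 1" for n r
  proof -
    have "\<bar>r\<bar> * norm B \<le> (\<bar>s\<bar> + 1) * norm B"
      using that by (intro mult_right_mono) (auto simp: dist_real_def)
    then have "norm (C + r *\<^sub>R B) \<le> R"
      using norm_triangle_ineq[of C "r *\<^sub>R B"] by (simp add: R_def)
    then show ?thesis by (rule norm_exp_term_le[OF less_imp_le[OF c(1)] c(2)])
  qed
  then show thesis by (rule that[OF summable_exp_majorant])
qed

text \<open>\<open>d/ds exp(C + sB) = B exp(C + sB)\<close> for commuting \<open>B\<close>, \<open>C\<close>, by termwise differentiation on the
  unit ball around \<open>s\<close>, where the series of derivatives is dominated (Weierstrass test).\<close>
lemma mat_exp_has_vector_derivative:
  fixes B C :: "complex^'n^'n"
  assumes BC: "B ** C = C ** B"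
  shows "((\<lambda>s. mat_exp (C + s *\<^sub>R B)) has_vector_derivative B ** mat_exp (C + s *\<^sub>R B)) (at s)"
proof -
  define f where "f n r = (1 / fact n) *\<^sub>R mat_pow (C + r *\<^sub>R B) n" for n r
  define f' where "f' n r = (case n of 0 \<Rightarrow> 0 | Suc m \<Rightarrow> B ** f m r)" for n r
  obtain E where E: "summable E" "\<And>n r. r \<in> ball s 1 \<Longrightarrow> norm (f n r) \<le> E n"
    unfolding f_def using exp_series_dominated by blast
  obtain cB where cB: "cB > 0" "\<And>Z :: complex^'n^'n. norm (B ** Z) \<le> norm Z * cB"
    using bounded_linear.pos_bounded[OF bounded_bilinear.bounded_linear_right[OF bounded_bilinear_matrix_mult]]
    by blast
  define M where "M n = (case n of 0 \<Rightarrow> 0 | Suc m \<Rightarrow> E m * cB)" for n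
  have f'_bound: "norm (f' n r) \<le> M n" if "r \<in> ball s 1" for n r
  proof (cases n)
    case (Suc m)
    have "norm (B ** f m r) \<le> norm (f m r) * cB" by (rule cB(2))
    also have "\<dots> \<le> E m * cB" using E(2)[OF that] cB(1) by (simp add: mult_right_mono)
    finally show ?thesis by (simp add: Suc f'_def M_def)
  qed (simp add: f'_def M_def)
  have "summable (\<lambda>m. M (Suc m))"
    unfolding M_def using E(1) by (simp add: summable_mult2)
  then have "summable M" by (simp only: summable_Suc_iff)
  have s_ball: "s \<in> ball s 1" by simp
  have f_summable: "summable (\<lambda>n. f n s)"
    using E(2)[OF s_ball] by (intro summable_comparison_test[OF _ E(1)]) auto
  have der: "(f n has_vector_derivative f' n r) (at r)" for n r
    unfolding f_def f'_def
    by (cases n) (use exp_term_has_vector_derivative[OF BC, of _ r] in simp_all)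
  have "uniform_limit (ball s 1) (\<lambda>n r. \<Sum>i<n. f' i r) (\<lambda>r. \<Sum>i. f' i r) sequentially"
    by (rule Weierstrass_m_test[OF f'_bound \<open>summable M\<close>])
  then have "((\<lambda>r. \<Sum>n. f n r) has_vector_derivative (\<Sum>i. f' i s)) (at s)"
    by (rule has_vector_derivative_suminf[OF convex_ball open_ball der _ s_ball f_summable s_ball])
  moreover have "(\<Sum>i. f' i s) = B ** mat_exp (C + s *\<^sub>R B)"
  proof -
    have "summable (\<lambda>n. f' n s)"
      using f'_bound[OF s_ball] by (intro summable_comparison_test[OF _ \<open>summable M\<close>]) auto
    from suminf_split_head[OF this] have "(\<Sum>i. f' i s) = (\<Sum>n. B ** f n s)"
      by (simp add: f'_def)
    also have "\<dots> = B ** (\<Sum>n. f n s)"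
      by (rule bounded_linear.suminf[OF bounded_bilinear.bounded_linear_right[OF bounded_bilinear_matrix_mult]
            f_summable, symmetric])
    finally show ?thesis by (simp add: mat_exp_def f_def)
  qed
  ultimately show ?thesis by (simp add: mat_exp_def f_def)
qed

subsection \<open>Algebra of the Cayley resolvents\<close>

text \<open>The resolvent \<open>(I - cA)\<^sup>-\<^sup>1\<close>.  For \<open>c = \<plusminus>\<i>\<close> these are the two factors of \<open>(I + A\<^sup>2)\<^sup>-\<^sup>1\<close>.\<close>
definition resolvent :: "complex \<Rightarrow> complex^'n^'n \<Rightarrow> complex^'n^'n" where
  "resolvent c A = matrix_inv (mat 1 - cscale c A)"

lemma resolvent_inverse:
  assumes "invertible (mat 1 - cscale c A)"
  shows "resolvent c A ** (mat 1 - cscale c A) = mat 1" "(mat 1 - cscale c A) ** resolvent c A = mat 1"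
  using assms by (simp_all add: resolvent_def matrix_inv_left matrix_inv_right)

lemma cayley_pair:
  fixes A Gp Gm :: "complex^'n^'n"
  assumes Gp: "Gp ** (mat 1 - cscale \<i> A) = mat 1" "(mat 1 - cscale \<i> A) ** Gp = mat 1"
    and Gm: "Gm ** (mat 1 + cscale \<i> A) = mat 1" "(mat 1 + cscale \<i> A) ** Gm = mat 1"
  shows "Gp ** A = cscale (-\<i>) (Gp - mat 1)" "A ** Gp = cscale (-\<i>) (Gp - mat 1)"
    and "Gm ** A = cscale (-\<i>) (mat 1 - Gm)" "A ** Gm = cscale (-\<i>) (mat 1 - Gm)"
    and "Gp ** Gm = cscale (1/2) (Gp + Gm)" "Gm ** Gp = cscale (1/2) (Gp + Gm)"
proof -
  have i_inv: "\<i> * - \<i> = 1" by simp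
  show "Gp ** A = cscale (-\<i>) (Gp - mat 1)"
    using Gp(1) by (intro cscale_solve[OF i_inv]) (simp add: matrix_ring_simps algebra_simps)
  show "A ** Gp = cscale (-\<i>) (Gp - mat 1)"
    using Gp(2) by (intro cscale_solve[OF i_inv]) (simp add: matrix_ring_simps algebra_simps)
  show "Gm ** A = cscale (-\<i>) (mat 1 - Gm)"
    using Gm(1) by (intro cscale_solve[OF i_inv]) (simp add: matrix_ring_simps algebra_simps)
  show "A ** Gm = cscale (-\<i>) (mat 1 - Gm)"
    using Gm(2) by (intro cscale_solve[OF i_inv]) (simp add: matrix_ring_simps algebra_simps)
  have "Gp ** (mat 1 - cscale \<i> A) ** Gm = Gm" "Gp ** (mat 1 + cscale \<i> A) ** Gm = Gp"
    using Gp(1) Gm(2) by (simp_all flip: matrix_mul_assoc)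
  then have "Gp ** Gm + Gp ** Gm = Gp + Gm" by (simp add: matrix_ring_simps algebra_simps)
  then show "Gp ** Gm = cscale (1/2) (Gp + Gm)" by (metis cscale_half_double)
  have "Gm ** (mat 1 - cscale \<i> A) ** Gp = Gm" "Gm ** (mat 1 + cscale \<i> A) ** Gp = Gp"
    using Gp(2) Gm(1) by (simp_all flip: matrix_mul_assoc)
  then have "Gm ** Gp + Gm ** Gp = Gp + Gm" by (simp add: matrix_ring_simps algebra_simps)
  then show "Gm ** Gp = cscale (1/2) (Gp + Gm)" by (metis cscale_half_double)
qed

lemma resolvent_split:
  fixes A :: "complex^'n^'n"
  assumes inv: "invertible (mat 1 + A ** A)"
  shows "invertible (mat 1 - cscale \<i> A)" "invertible (mat 1 - cscale (-\<i>) A)"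
    and "matrix_inv (mat 1 + A ** A) = cscale (1/2) (resolvent \<i> A + resolvent (-\<i>) A)"
    and "A ** matrix_inv (mat 1 + A ** A) = cscale (-\<i>/2) (resolvent \<i> A - resolvent (-\<i>) A)"
proof -
  define Gp Gm where "Gp = resolvent \<i> A" and "Gm = resolvent (-\<i>) A"
  have minus_i: "mat 1 - cscale (-\<i>) A = mat 1 + cscale \<i> A"
    by (simp add: cscale_neg_scalar)
  have factor: "mat 1 + A ** A = (mat 1 - cscale \<i> A) ** (mat 1 + cscale \<i> A)"
    by (simp add: matrix_ring_simps cscale_neg_scalar)
  show inv_p: "invertible (mat 1 - cscale \<i> A)"
    by (rule invertible_mult_factors(1)[OF inv[unfolded factor]])
  show inv_m: "invertible (mat 1 - cscale (-\<i>) A)"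
    unfolding minus_i by (rule invertible_mult_factors(2)[OF inv[unfolded factor]])
  have Gp: "Gp ** (mat 1 - cscale \<i> A) = mat 1" "(mat 1 - cscale \<i> A) ** Gp = mat 1"
    unfolding Gp_def by (rule resolvent_inverse[OF inv_p])+
  have Gm: "Gm ** (mat 1 + cscale \<i> A) = mat 1" "(mat 1 + cscale \<i> A) ** Gm = mat 1"
    unfolding Gm_def minus_i[symmetric] by (rule resolvent_inverse[OF inv_m])+
  note pair = cayley_pair[OF Gp Gm]
  have "(Gm ** Gp) ** (mat 1 + A ** A) = Gm ** ((Gp ** (mat 1 - cscale \<i> A)) ** (mat 1 + cscale \<i> A))"
    unfolding factor by (simp add: matrix_mul_assoc)
  also have "\<dots> = mat 1" using Gp(1) Gm(1) by simp
  finally have "(Gm ** Gp) ** (mat 1 + A ** A) = mat 1" .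
  then have inv_eq: "matrix_inv (mat 1 + A ** A) = Gm ** Gp"
    using inv by (rule matrix_inv_unique)
  then show "matrix_inv (mat 1 + A ** A) = cscale (1/2) (resolvent \<i> A + resolvent (-\<i>) A)"
    using pair(6) by (simp add: Gp_def Gm_def)
  have "A ** (Gm ** Gp) = cscale (-\<i>) (mat 1 - Gm) ** Gp"
    by (simp only: matrix_mul_assoc pair(4))
  also have "\<dots> = cscale (-\<i>) (Gp - Gm ** Gp)"
    by (simp add: matrix_diff_rdistrib)
  also have "\<dots> = cscale (-\<i>) (Gp - cscale (1/2) (Gp + Gm))"
    by (simp only: pair(6))
  also have "\<dots> = cscale (-\<i>/2) (Gp - Gm)"
    by (simp add: cscale_def vec_eq_iff field_simps)
  finally show "A ** matrix_inv (mat 1 + A ** A) = cscale (-\<i>/2) (resolvent \<i> A - resolvent (-\<i>) A)"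
    by (simp add: inv_eq Gp_def Gm_def)
qed

text \<open>The Sylvester equation \<open>SK + KS = VU\<close> becomes, after sandwiching with \<open>Y\<^sub>\<plusminus> = X G\<^sub>\<plusminus> S\<^sup>-\<^sup>1 G\<^sub>\<plusminus>\<close>
  (for \<open>X\<close> commuting with \<open>S\<close>), an anticommutator relation between \<open>Y\<^sub>+\<close> and \<open>Y\<^sub>-\<close>.\<close>
lemma anticommutator_identity:
  fixes S T X K Gp Gm :: "complex^'n^'n"
  assumes ST: "S ** T = mat 1" "T ** S = mat 1" and XS: "X ** S = S ** X"
    and Gp: "Gp ** (mat 1 - cscale \<i> (K ** X)) = mat 1" "(mat 1 - cscale \<i> (K ** X)) ** Gp = mat 1"
    and Gm: "Gm ** (mat 1 + cscale \<i> (K ** X)) = mat 1" "(mat 1 + cscale \<i> (K ** X)) ** Gm = mat 1"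
  defines "Yp \<equiv> X ** Gp ** T ** Gp" and "Ym \<equiv> X ** Gm ** T ** Gm"
  shows "Yp ** (S ** K + K ** S) ** Ym + Ym ** (S ** K + K ** S) ** Yp = cscale \<i> (Ym - Yp)"
proof -
  note pair = cayley_pair[OF Gp Gm]
  have move_X: "Z ** S ** X = Z ** X ** S" for Z :: "complex^'n^'n"
    using XS by (simp flip: matrix_mul_assoc)
  have cancel_ST: "Z ** S ** T = Z" "Z ** T ** S = Z" for Z :: "complex^'n^'n"
    using ST by (simp_all flip: matrix_mul_assoc)
  have "Gp ** (S ** K + K ** S) ** X ** Gm = Gp ** S ** (K ** X ** Gm) + Gp ** (K ** X) ** S ** Gm"
    by (simp add: matrix_ring_simps move_X)
  also have "\<dots> = Gp ** S ** cscale (-\<i>) (mat 1 - Gm) + cscale (-\<i>) (Gp - mat 1) ** S ** Gm"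
    by (simp only: pair(1,4))
  finally have sandwich_pm: "Gp ** (S ** K + K ** S) ** X ** Gm = cscale (-\<i>) (Gp ** S - S ** Gm)"
    by (simp add: matrix_ring_simps)
  have "Gm ** (S ** K + K ** S) ** X ** Gp = Gm ** S ** (K ** X ** Gp) + Gm ** (K ** X) ** S ** Gp"
    by (simp add: matrix_ring_simps move_X)
  also have "\<dots> = Gm ** S ** cscale (-\<i>) (Gp - mat 1) + cscale (-\<i>) (mat 1 - Gm) ** S ** Gp"
    by (simp only: pair(2,3))
  finally have sandwich_mp: "Gm ** (S ** K + K ** S) ** X ** Gp = cscale (-\<i>) (S ** Gp - Gm ** S)"
    by (simp add: matrix_ring_simps)
  have "Yp ** (S ** K + K ** S) ** Ym = X ** Gp ** T ** (Gp ** (S ** K + K ** S) ** X ** Gm) ** T ** Gm"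
    by (simp add: Yp_def Ym_def matrix_mul_assoc)
  also have "\<dots> = cscale (-\<i>) (X ** Gp ** T ** (Gp ** Gm) - X ** (Gp ** Gm) ** T ** Gm)"
    by (simp only: sandwich_pm) (simp add: matrix_ring_simps cancel_ST ST)
  finally have first: "Yp ** (S ** K + K ** S) ** Ym
      = cscale (-\<i>) (X ** Gp ** T ** (Gp ** Gm) - X ** (Gp ** Gm) ** T ** Gm)" .
  have "Ym ** (S ** K + K ** S) ** Yp = X ** Gm ** T ** (Gm ** (S ** K + K ** S) ** X ** Gp) ** T ** Gp"
    by (simp add: Yp_def Ym_def matrix_mul_assoc)
  also have "\<dots> = cscale (-\<i>) (X ** (Gm ** Gp) ** T ** Gp - X ** Gm ** T ** (Gm ** Gp))"
    by (simp only: sandwich_mp) (simp add: matrix_ring_simps cancel_ST ST)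
  finally have second: "Ym ** (S ** K + K ** S) ** Yp
      = cscale (-\<i>) (X ** (Gm ** Gp) ** T ** Gp - X ** Gm ** T ** (Gm ** Gp))" .
  have "Yp ** (S ** K + K ** S) ** Ym + Ym ** (S ** K + K ** S) ** Yp
      = cscale (-\<i>) (cscale (1/2) ((Yp - Ym) + (Yp - Ym)))"
    unfolding first second pair(5,6) by (simp add: Yp_def Ym_def matrix_ring_simps algebra_simps)
  also have "\<dots> = cscale \<i> (Ym - Yp)"
    by (simp only: cscale_half_double) (simp add: cscale_neg_scalar)
  finally show ?thesis .
qed

text \<open>The algebraic core of the derivative of \<open>X (I - cKX)\<^sup>-\<^sup>1\<close> along \<open>X' = -TX\<close>, \<open>XT = TX\<close>:
  product rule plus \<open>(G\<^sup>-\<^sup>1)' = -G\<^sup>-\<^sup>1 N' G\<^sup>-\<^sup>1\<close> collapse to \<open>-X G T G\<close>.\<close>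
lemma resolvent_derivative_identity:
  fixes X T K G :: "complex^'n^'n"
  assumes XT: "X ** T = T ** X" and G: "G ** (mat 1 - cscale c (K ** X)) = mat 1"
  shows "X ** - (G ** - cscale c (K ** - (T ** X)) ** G) + - (T ** X) ** G = - (X ** G ** T ** G)"
proof -
  have GKX: "cscale c (G ** K ** X) = G - mat 1"
    using G by (simp add: matrix_ring_simps algebra_simps)
  have TX: "T ** X = X ** T" "Z ** T ** X = Z ** X ** T" for Z :: "complex^'n^'n"
    using XT by (simp_all flip: matrix_mul_assoc)
  have "X ** - (G ** - cscale c (K ** - (T ** X)) ** G) = - (X ** cscale c (G ** K ** X) ** T ** G)"
    by (simp add: matrix_ring_simps TX)
  also have "\<dots> = - (X ** (G - mat 1) ** T ** G)"
    by (simp only: GKX)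
  finally show ?thesis by (simp add: matrix_ring_simps TX)
qed

lemma half_sum_square_identity:
  fixes a b :: "complex^'m^'m"
  assumes "a ** b + b ** a = cscale \<i> (b - a)"
  shows "cscale (1/2) (- a - b) ** cscale (1/2) (- a - b) + cscale (\<i>/2) (b - a) ** cscale (\<i>/2) (b - a)
           = cscale (\<i>/2) (b - a)"
proof -
  have "cscale (1/2) (- a - b) ** cscale (1/2) (- a - b) + cscale (\<i>/2) (b - a) ** cscale (\<i>/2) (b - a)
      = cscale (1/2) (a ** b + b ** a)"
    by (simp add: matrix_ring_simps algebra_simps cscale_neg_scalar)
  also have "\<dots> = cscale (\<i>/2) (b - a)" using assms by simp
  finally show ?thesis .
qed

lemma resolvent_form:
  fixes X K :: "complex^'n^'n" and U :: "complex^'n^'m" and V :: "complex^'k^'n"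
  assumes inv: "invertible (mat 1 + (K ** X) ** (K ** X))"
  defines "w c \<equiv> U ** (X ** resolvent c (K ** X)) ** V"
  shows "U ** X ** matrix_inv (mat 1 + (K ** X) ** (K ** X)) ** V = cscale (1/2) (w \<i> + w (-\<i>))"
    and "U ** X ** K ** X ** matrix_inv (mat 1 + (K ** X) ** (K ** X)) ** V
           = cscale (-\<i>/2) (w \<i> - w (-\<i>))"
proof -
  note split = resolvent_split[OF inv]
  show "U ** X ** matrix_inv (mat 1 + (K ** X) ** (K ** X)) ** V = cscale (1/2) (w \<i> + w (-\<i>))"
    unfolding split(3) w_def by (simp add: matrix_ring_simps)
  have "U ** X ** K ** X ** matrix_inv (mat 1 + (K ** X) ** (K ** X)) ** V
      = U ** (X ** ((K ** X) ** matrix_inv (mat 1 + (K ** X) ** (K ** X)))) ** V"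
    by (simp add: matrix_mul_assoc)
  then show "U ** X ** K ** X ** matrix_inv (mat 1 + (K ** X) ** (K ** X)) ** V
      = cscale (-\<i>/2) (w \<i> - w (-\<i>))"
    unfolding split(4) w_def by (simp add: matrix_ring_simps)
qed

lemma sylvester_anticommutator:
  fixes S T K X :: "complex^'n^'n" and U :: "complex^'n^'m" and V :: "complex^'m^'n"
  assumes ST: "S ** T = mat 1" "T ** S = mat 1" and XS: "X ** S = S ** X"
    and K_eq: "S ** K + K ** S = V ** U"
    and inv: "invertible (mat 1 + (K ** X) ** (K ** X))"
  defines "Y c \<equiv> X ** resolvent c (K ** X) ** T ** resolvent c (K ** X)"
  shows "(U ** Y \<i> ** V) ** (U ** Y (-\<i>) ** V) + (U ** Y (-\<i>) ** V) ** (U ** Y \<i> ** V)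
           = cscale \<i> (U ** Y (-\<i>) ** V - U ** Y \<i> ** V)"
proof -
  note split = resolvent_split[OF inv]
  have minus_i: "mat 1 - cscale (-\<i>) (K ** X) = mat 1 + cscale \<i> (K ** X)"
    by (simp add: cscale_neg_scalar)
  have "Y \<i> ** (S ** K + K ** S) ** Y (-\<i>) + Y (-\<i>) ** (S ** K + K ** S) ** Y \<i> = cscale \<i> (Y (-\<i>) - Y \<i>)"
    unfolding Y_def
    by (rule anticommutator_identity[OF ST XS resolvent_inverse[OF split(1)]
          resolvent_inverse[OF split(2), unfolded minus_i]])
  then have "U ** (Y \<i> ** (V ** U) ** Y (-\<i>) + Y (-\<i>) ** (V ** U) ** Y \<i>) ** V
      = U ** cscale \<i> (Y (-\<i>) - Y \<i>) ** V"
    by (simp only: K_eq)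
  then show ?thesis by (simp add: matrix_ring_simps)
qed

subsection \<open>Differentiation along the flow \<open>X' = -TX\<close>\<close>

lemma vector_derivative_eventually_eq:
  fixes f g :: "real \<Rightarrow> 'a::real_normed_vector"
  assumes "\<forall>\<^sub>F t in nhds y. f t = g t" and "(g has_vector_derivative D) (at y)"
  shows "vector_derivative f (at y) = D"
proof -
  have "(f has_vector_derivative D) (at y within UNIV) \<longleftrightarrow> (g has_vector_derivative D) (at y within UNIV)"
    by (rule has_vector_derivative_cong_ev) (use assms(1) eventually_nhds_x_imp_x in auto)
  then show ?thesis using assms(2) by (simp add: vector_derivative_at)
qed

lemma resolvent_curve_derivative:
  fixes X :: "real \<Rightarrow> complex^'n^'n" and T K :: "complex^'n^'n"
    and U :: "complex^'n^'m" and V :: "complex^'k^'n"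
  assumes dX: "(X has_vector_derivative - (T ** X y)) (at y)"
    and XT: "X y ** T = T ** X y"
    and inv: "\<forall>\<^sub>F t in nhds y. invertible (mat 1 - cscale c (K ** X t))"
  defines "G \<equiv> resolvent c (K ** X y)"
  shows "((\<lambda>t. U ** (X t ** resolvent c (K ** X t)) ** V) has_vector_derivative
           - (U ** (X y ** G ** T ** G) ** V)) (at y)"
proof -
  have linear_K: "bounded_linear (\<lambda>Z. cscale c (K ** Z))"
    by (rule bounded_linear_compose[OF bounded_linear_cscale
          bounded_bilinear.bounded_linear_right[OF bounded_bilinear_matrix_mult]])
  have linear_UV: "bounded_linear (\<lambda>Z. U ** Z ** V)"
    by (rule bounded_linear_compose[OF bounded_bilinear.bounded_linear_left[OF bounded_bilinear_matrix_mult]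
          bounded_bilinear.bounded_linear_right[OF bounded_bilinear_matrix_mult]])
  have "((\<lambda>t. mat 1 - cscale c (K ** X t)) has_vector_derivative - cscale c (K ** - (T ** X y))) (at y)"
    using has_vector_derivative_diff[OF has_vector_derivative_const
        bounded_linear.has_vector_derivative[OF linear_K dX]] by simp
  then have "((\<lambda>t. resolvent c (K ** X t)) has_vector_derivative
      - (G ** - cscale c (K ** - (T ** X y)) ** G)) (at y)"
    unfolding G_def resolvent_def using inv by (rule has_vector_derivative_matrix_inv)
  then have "((\<lambda>t. X t ** resolvent c (K ** X t)) has_vector_derivative
      X y ** - (G ** - cscale c (K ** - (T ** X y)) ** G) + - (T ** X y) ** G) (at y)"
    unfolding G_def by (rule bounded_bilinear.has_vector_derivative[OF bounded_bilinear_matrix_mult dX])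
  moreover have "X y ** - (G ** - cscale c (K ** - (T ** X y)) ** G) + - (T ** X y) ** G
      = - (X y ** G ** T ** G)"
    using XT resolvent_inverse(1)[OF eventually_nhds_x_imp_x[OF inv]] unfolding G_def
    by (rule resolvent_derivative_identity)
  ultimately have "((\<lambda>t. X t ** resolvent c (K ** X t)) has_vector_derivative - (X y ** G ** T ** G)) (at y)"
    by simp
  from bounded_linear.has_vector_derivative[OF linear_UV this] show ?thesis
    by (simp add: matrix_minus_left matrix_minus_right)
qed

lemma exp_flow:
  fixes S T :: "complex^'n^'n" and x y :: real
  assumes ST: "S ** T = mat 1" "T ** S = mat 1"
  shows "((\<lambda>t. mat_exp (- (x *\<^sub>R S) - t *\<^sub>R T)) has_vector_derivative
           - (T ** mat_exp (- (x *\<^sub>R S) - y *\<^sub>R T))) (at y)"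
    and "mat_exp (- (x *\<^sub>R S) - y *\<^sub>R T) ** S = S ** mat_exp (- (x *\<^sub>R S) - y *\<^sub>R T)"
proof -
  have "(- T) ** (- (x *\<^sub>R S)) = (- (x *\<^sub>R S)) ** (- T)"
    using ST by (simp add: matrix_minus_left matrix_minus_right matrix_scaleR_left matrix_scaleR_right)
  from mat_exp_has_vector_derivative[OF this, of y]
  show "((\<lambda>t. mat_exp (- (x *\<^sub>R S) - t *\<^sub>R T)) has_vector_derivative
      - (T ** mat_exp (- (x *\<^sub>R S) - y *\<^sub>R T))) (at y)"
    by (simp add: matrix_minus_left)
  have "S ** (- (x *\<^sub>R S) - y *\<^sub>R T) = (- (x *\<^sub>R S) - y *\<^sub>R T) ** S"
    using ST by (simp add: matrix_ring_simps matrix_scaleR_left matrix_scaleR_right)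
  then show "mat_exp (- (x *\<^sub>R S) - y *\<^sub>R T) ** S = S ** mat_exp (- (x *\<^sub>R S) - y *\<^sub>R T)"
    by (simp add: mat_exp_commute)
qed

text \<open>Only the derivative of \<open>X\<close> at \<open>y\<close>, its commutation with \<open>S\<close> there, and the formulas for
  \<open>q\<close> and \<open>p\<close> near \<open>y\<close> enter.\<close>
lemma squared_derivatives_identity:
  fixes S T K :: "complex^'n^'n" and U :: "complex^'n^'m" and V :: "complex^'m^'n"
    and X :: "real \<Rightarrow> complex^'n^'n" and q p :: "real \<Rightarrow> complex^'m^'m" and p0 :: "complex^'m^'m"
  assumes ST: "S ** T = mat 1" "T ** S = mat 1"
    and K_eq: "S ** K + K ** S = V ** U"
    and dX: "(X has_vector_derivative - (T ** X y)) (at y)"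
    and XS: "X y ** S = S ** X y"
    and near_y: "\<forall>\<^sub>F t in nhds y. invertible (mat 1 + (K ** X t) ** (K ** X t))
        \<and> q t = U ** X t ** matrix_inv (mat 1 + (K ** X t) ** (K ** X t)) ** V
        \<and> p t = p0 - U ** X t ** K ** X t ** matrix_inv (mat 1 + (K ** X t) ** (K ** X t)) ** V"
  defines "qy \<equiv> vector_derivative q (at y)" and "py \<equiv> vector_derivative p (at y)"
  shows "qy ** qy + py ** py = py"
proof -
  define w where "w c t = U ** (X t ** resolvent c (K ** X t)) ** V" for c t
  define Y where "Y c = X y ** resolvent c (K ** X y) ** T ** resolvent c (K ** X y)" for c
  define a b where "a = U ** Y \<i> ** V" and "b = U ** Y (-\<i>) ** V"
  have XT: "X y ** T = T ** X y"
    using ST XS by (metis matrix_mul_assoc matrix_mul_lid matrix_mul_rid)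
  have dw: "(w c has_vector_derivative - (U ** Y c ** V)) (at y)" if "c = \<i> \<or> c = -\<i>" for c
  proof -
    have "\<forall>\<^sub>F t in nhds y. invertible (mat 1 - cscale c (K ** X t))"
      using near_y by (rule eventually_mono) (use that resolvent_split(1,2) in blast)
    then show ?thesis
      unfolding w_def Y_def by (rule resolvent_curve_derivative[OF dX XT])
  qed
  have "\<forall>\<^sub>F t in nhds y. q t = cscale (1/2) (w \<i> t + w (-\<i>) t)"
    using near_y by (rule eventually_mono) (auto simp: w_def resolvent_form(1))
  moreover have "((\<lambda>t. cscale (1/2) (w \<i> t + w (-\<i>) t)) has_vector_derivative
      cscale (1/2) (- a + - b)) (at y)"
    unfolding a_def b_def
    by (intro bounded_linear.has_vector_derivative[OF bounded_linear_cscale] has_vector_derivative_add dw) auto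
  ultimately have qy: "qy = cscale (1/2) (- a - b)"
    unfolding qy_def by (simp add: vector_derivative_eventually_eq)
  have "\<forall>\<^sub>F t in nhds y. p t = p0 - cscale (-\<i>/2) (w \<i> t - w (-\<i>) t)"
    using near_y by (rule eventually_mono) (auto simp: w_def resolvent_form(2))
  moreover have "((\<lambda>t. p0 - cscale (-\<i>/2) (w \<i> t - w (-\<i>) t)) has_vector_derivative
      0 - cscale (-\<i>/2) (- a - - b)) (at y)"
    unfolding a_def b_def
    by (intro has_vector_derivative_diff has_vector_derivative_const
        bounded_linear.has_vector_derivative[OF bounded_linear_cscale] has_vector_derivative_diff dw) auto
  ultimately have py: "py = cscale (\<i>/2) (b - a)"
    unfolding py_def by (simp add: vector_derivative_eventually_eq cscale_neg_scalar)
  have "a ** b + b ** a = cscale \<i> (b - a)"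
    unfolding a_def b_def Y_def
    by (rule sylvester_anticommutator[OF ST XS K_eq]) (use eventually_nhds_x_imp_x[OF near_y] in blast)
  then show ?thesis unfolding qy py by (rule half_sum_square_identity)
qed

theorem mainTheorem2:
  fixes S K :: "complex^'M^'M"
    and U :: "complex^'M^'m"
    and V :: "complex^'m^'M"
    and p0 :: "real \<Rightarrow> complex^'m^'m"
    and D :: "(real \<times> real) set"
    and Xi :: "real \<Rightarrow> real \<Rightarrow> complex^'M^'M"
    and q p :: "real \<Rightarrow> real \<Rightarrow> complex^'m^'m"
  assumes S_inv: "invertible S"
    and K_eq: "S ** K + K ** S = V ** U"
    and Xi_def: "\<And>x y. Xi x y = mat_exp (- (x *\<^sub>R S) - (y *\<^sub>R matrix_inv S))"
    and q_def: "\<And>x y. q x y = U ** Xi x y ** matrix_inv (mat 1 + (K ** Xi x y) ** (K ** Xi x y)) ** V"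
    and p_def: "\<And>x y. p x y = p0 x - U ** Xi x y ** K ** Xi x y
                         ** matrix_inv (mat 1 + (K ** Xi x y) ** (K ** Xi x y)) ** V"
    and D_open: "open D"
    and D_inv: "\<And>x y. (x, y) \<in> D \<Longrightarrow> invertible (mat 1 + (K ** Xi x y) ** (K ** Xi x y))"
  shows "\<forall>(x, y) \<in> D.
           (let qy = vector_derivative (\<lambda>t. q x t) (at y);
                py = vector_derivative (\<lambda>t. p x t) (at y)
            in qy ** qy + py ** py = py)"
proof -
  define T where "T = matrix_inv S"
  have ST: "S ** T = mat 1" "T ** S = mat 1"
    unfolding T_def using S_inv by (simp_all add: matrix_inv_right matrix_inv_left)
  have "vector_derivative (\<lambda>t. q x t) (at y) ** vector_derivative (\<lambda>t. q x t) (at y)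
      + vector_derivative (\<lambda>t. p x t) (at y) ** vector_derivative (\<lambda>t. p x t) (at y)
      = vector_derivative (\<lambda>t. p x t) (at y)" if xy: "(x, y) \<in> D" for x y
  proof -
    have Xi_flow: "Xi x = (\<lambda>t. mat_exp (- (x *\<^sub>R S) - t *\<^sub>R T))"
      by (rule ext) (simp add: Xi_def T_def)
    have "((\<lambda>t. (x, t)) \<longlongrightarrow> (x, y)) (nhds y)"
      by (intro tendsto_Pair tendsto_const filterlim_ident)
    then have near_y: "\<forall>\<^sub>F t in nhds y. (x, t) \<in> D"
      using D_open xy unfolding tendsto_def by blast
    have dX: "(Xi x has_vector_derivative - (T ** Xi x y)) (at y)"
      and XS: "Xi x y ** S = S ** Xi x y"
      unfolding Xi_flow by (rule exp_flow[OF ST])+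
    show ?thesis
      by (rule squared_derivatives_identity[OF ST K_eq dX XS])
        (use near_y in \<open>auto elim!: eventually_mono simp: D_inv q_def p_def\<close>)
  qed
  then show ?thesis by (auto simp: Let_def)
qed

end
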